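(* Let $G$ be a finite simple graph with $n$ vertices $v_1,\dots,v_n$, let $\bar{\bar{d}}=\sqrt{\frac{d(v_1)^2+\cdots+d(v_n)^2}{n}}$, and let $\omega(G)$ be the clique number of $G$. Suppose $$\omega(G)=\frac{n}{n-\bar{\bar{d}}}.$$ Then $G$ is a regular complete $\omega(G)$-partite graph (i.e. a complete $\omega(G)$-chromatic graph which is regular, so its $\omega(G)$ parts all have size $n/\omega(G)$).
   Context: All graphs are finite, undirected, without loops or multiple edges; $d(v)$ denotes the degree of vertex $v$. *)

theory Defs
  imports Complex_Main "HOL-Library.Disjoint_Sets"
begin

definition simple_graph :: "'a set \<Rightarrow> ('a \<Rightarrow> 'a \<Rightarrow> bool) \<Rightarrow> bool" where
  "simple_graph V E \<longleftrightarrow> finite V \<and> (\<forall>x y. E x y \<longrightarrow> x \<in> V \<and> y \<in> V)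
     \<and> (\<forall>x y. E x y \<longrightarrow> E y x) \<and> (\<forall>x. \<not> E x x)"

definition degree :: "'a set \<Rightarrow> ('a \<Rightarrow> 'a \<Rightarrow> bool) \<Rightarrow> 'a \<Rightarrow> nat" where
  "degree V E v = card {u \<in> V. E v u}"

definition is_clique :: "'a set \<Rightarrow> ('a \<Rightarrow> 'a \<Rightarrow> bool) \<Rightarrow> 'a set \<Rightarrow> bool" where
  "is_clique V E C \<longleftrightarrow> C \<subseteq> V \<and> (\<forall>x\<in>C. \<forall>y\<in>C. x \<noteq> y \<longrightarrow> E x y)"

definition clique_number :: "'a set \<Rightarrow> ('a \<Rightarrow> 'a \<Rightarrow> bool) \<Rightarrow> nat" where
  "clique_number V E = Max {card C | C. is_clique V E C}"

definition quad_mean_degree :: "'a set \<Rightarrow> ('a \<Rightarrow> 'a \<Rightarrow> bool) \<Rightarrow> real" where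
  "quad_mean_degree V E = sqrt ((\<Sum>v\<in>V. (real (degree V E v))^2) / real (card V))"

definition regular :: "'a set \<Rightarrow> ('a \<Rightarrow> 'a \<Rightarrow> bool) \<Rightarrow> bool" where
  "regular V E \<longleftrightarrow> (\<exists>r. \<forall>v\<in>V. degree V E v = r)"

definition complete_multipartite :: "'a set \<Rightarrow> ('a \<Rightarrow> 'a \<Rightarrow> bool) \<Rightarrow> nat \<Rightarrow> bool" where
  "complete_multipartite V E k \<longleftrightarrow> (\<exists>P. partition_on V P \<and> card P = k
     \<and> (\<forall>X\<in>P. \<forall>x\<in>X. \<forall>y\<in>X. \<not> E x y)
     \<and> (\<forall>X\<in>P. \<forall>Y\<in>P. X \<noteq> Y \<longrightarrow> (\<forall>x\<in>X. \<forall>y\<in>Y. E x y)))"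

end

theory Submission
  imports Defs
begin

text \<open>Write A for the adjacency matrix, d for the degree vector and c = 1 - 1/\<omega>.
By the Motzkin--Straus inequality x^T A x \<le> c (\<Sum>x)^2 \<le> c n |x|^2 for x \<ge> 0, hence
|x^T A x| \<le> c n |x|^2 for every x. Polarizing at the all-one vector and d bounds
\<Sum> d^2 = 1^T A d by c n \<surd>n |d|, i.e. the quadratic mean of the degrees is at most c n.
The hypothesis says it equals c n, which forces equality in Cauchy--Schwarz: G is regular,
and every vertex has exactly k = n/\<omega> non-neighbours (counting itself).
If xy and yz were non-edges but xz an edge, a greedy clique in the neighbourhood of x
started at z would have at least \<omega> vertices, and adding x would exceed the clique number.
So non-adjacency is an equivalence relation, and its classes, of size k, are the \<omega> parts.\<close>

lemma simple_graph_finite: "simple_graph V E \<Longrightarrow> finite V"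
  by (simp add: simple_graph_def)

lemma simple_graph_sym: "simple_graph V E \<Longrightarrow> E a b \<Longrightarrow> E b a"
  by (simp add: simple_graph_def)

lemma simple_graph_irrefl: "simple_graph V E \<Longrightarrow> \<not> E a a"
  by (simp add: simple_graph_def)

lemma clique_number_finite:
  assumes "simple_graph V E"
  shows "finite {card C | C. is_clique V E C}"
proof -
  have "{card C | C. is_clique V E C} \<subseteq> {..card V}"
    using simple_graph_finite[OF assms] by (auto simp: is_clique_def intro: card_mono)
  then show ?thesis by (rule finite_subset) simp
qed

lemma card_le_clique_number:
  "simple_graph V E \<Longrightarrow> is_clique V E C \<Longrightarrow> card C \<le> clique_number V E"
  unfolding clique_number_def by (auto intro: Max_ge clique_number_finite)

lemma clique_number_ge_1:
  assumes "simple_graph V E" and "V \<noteq> {}"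
  shows "1 \<le> clique_number V E"
proof -
  obtain v where "v \<in> V" using assms(2) by auto
  then have "is_clique V E {v}" by (simp add: is_clique_def)
  from card_le_clique_number[OF assms(1) this] show ?thesis by simp
qed

lemma sum_sum_diff_squares:
  fixes f :: "'b \<Rightarrow> real"
  shows "(\<Sum>a\<in>A. \<Sum>b\<in>A. (f a - f b)^2) = 2 * (real (card A) * (\<Sum>a\<in>A. (f a)^2) - (\<Sum>a\<in>A. f a)^2)"
proof -
  have sq_left: "(\<Sum>a\<in>A. \<Sum>b\<in>A. (f a)^2) = real (card A) * (\<Sum>a\<in>A. (f a)^2)"
    by (simp add: sum_distrib_left mult.commute)
  have sq_right: "(\<Sum>a\<in>A. \<Sum>b\<in>A. (f b)^2) = real (card A) * (\<Sum>a\<in>A. (f a)^2)"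
    by simp
  have prod: "(\<Sum>a\<in>A. \<Sum>b\<in>A. f a * f b) = (\<Sum>a\<in>A. f a)^2"
    by (simp add: power2_eq_square sum_product)
  have "(\<Sum>a\<in>A. \<Sum>b\<in>A. (f a - f b)^2)
      = (\<Sum>a\<in>A. \<Sum>b\<in>A. (f a)^2) + (\<Sum>a\<in>A. \<Sum>b\<in>A. (f b)^2) - 2 * (\<Sum>a\<in>A. \<Sum>b\<in>A. f a * f b)"
    by (simp add: power2_diff sum.distrib sum_subtractf sum_distrib_left mult.assoc)
  also have "\<dots> = 2 * (real (card A) * (\<Sum>a\<in>A. (f a)^2) - (\<Sum>a\<in>A. f a)^2)"
    unfolding sq_left sq_right prod by simp
  finally show ?thesis .
qed

lemma square_sum_le_card_mult_sum_squares:
  fixes f :: "'b \<Rightarrow> real"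
  shows "(\<Sum>a\<in>A. f a)^2 \<le> real (card A) * (\<Sum>a\<in>A. (f a)^2)"
proof -
  have "0 \<le> (\<Sum>a\<in>A. \<Sum>b\<in>A. (f a - f b)^2)" by (intro sum_nonneg) auto
  then show ?thesis unfolding sum_sum_diff_squares by simp
qed

lemma const_if_square_sum_eq_card_mult_sum_squares:
  fixes f :: "'b \<Rightarrow> real"
  assumes "finite A" and "(\<Sum>a\<in>A. f a)^2 = real (card A) * (\<Sum>a\<in>A. (f a)^2)"
    and "a \<in> A" and "b \<in> A"
  shows "f a = f b"
proof -
  have "(\<Sum>a\<in>A. \<Sum>b\<in>A. (f a - f b)^2) = 0"
    unfolding sum_sum_diff_squares assms(2) by simp
  then have "\<forall>x\<in>A. (\<Sum>y\<in>A. (f x - f y)^2) = 0"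
    using assms(1) by (subst (asm) sum_nonneg_eq_0_iff) (auto intro: sum_nonneg)
  then have "(\<Sum>y\<in>A. (f a - f y)^2) = 0" using assms(3) by blast
  then have "(f a - f b)^2 = 0"
    using sum_nonneg_eq_0_iff[OF assms(1), of "\<lambda>y. (f a - f y)^2"] assms(4) by simp
  then show ?thesis by simp
qed

definition adj_form :: "'a set \<Rightarrow> ('a \<Rightarrow> 'a \<Rightarrow> bool) \<Rightarrow> ('a \<Rightarrow> real) \<Rightarrow> ('a \<Rightarrow> real) \<Rightarrow> real" where
  "adj_form V E x y = (\<Sum>a\<in>V. \<Sum>b\<in>V. if E a b then x a * y b else 0)"

lemma adj_form_sym:
  assumes "simple_graph V E"
  shows "adj_form V E x y = adj_form V E y x"
proof -
  have "adj_form V E x y = (\<Sum>b\<in>V. \<Sum>a\<in>V. if E a b then x a * y b else 0)"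
    unfolding adj_form_def by (rule sum.swap)
  also have "\<dots> = adj_form V E y x"
    unfolding adj_form_def
    by (intro sum.cong refl) (use simple_graph_sym[OF assms] in \<open>auto simp: mult.commute\<close>)
  finally show ?thesis .
qed

lemma adj_form_add_scaled:
  "adj_form V E (\<lambda>w. x w + t * f w) (\<lambda>w. x w + t * f w)
   = adj_form V E x x + t * adj_form V E x f + t * adj_form V E f x + t^2 * adj_form V E f f"
proof -
  have "\<And>a b. (if E a b then (x a + t * f a) * (x b + t * f b) else 0) =
     (if E a b then x a * x b else 0) + t * (if E a b then x a * f b else 0)
     + t * (if E a b then f a * x b else 0) + t^2 * (if E a b then f a * f b else 0)"
    by (simp add: algebra_simps power2_eq_square)
  then show ?thesis
    by (simp add: adj_form_def sum.distrib sum_distrib_left)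
qed

lemma adj_form_transfer_eq_0:
  assumes "simple_graph V E" and "\<not> E u v"
  defines "f \<equiv> \<lambda>w. (if w = u then 1 else 0) - (if w = v then 1 else 0 :: real)"
  shows "adj_form V E f f = 0"
proof -
  have "(if E a b then f a * f b else 0) = 0" for a b
    using assms simple_graph_sym[OF assms(1)] simple_graph_irrefl[OF assms(1)] by auto
  then show ?thesis by (simp add: adj_form_def)
qed

lemma adj_form_le_if_support_clique:
  assumes G: "simple_graph V E" and clique: "is_clique V E {v\<in>V. x v \<noteq> 0}"
  shows "adj_form V E x x \<le> (1 - 1 / real (clique_number V E)) * (\<Sum>v\<in>V. x v)^2"
proof -
  define S where "S = {v\<in>V. x v \<noteq> 0}"
  have fin: "finite V" using simple_graph_finite[OF G] .
  have terms: "(if E a b then x a * x b else 0) = x a * x b - (if a = b then x a * x b else 0)"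
    if "a \<in> V" "b \<in> V" for a b
    using that clique simple_graph_irrefl[OF G] unfolding is_clique_def by auto
  have "adj_form V E x x = (\<Sum>a\<in>V. \<Sum>b\<in>V. x a * x b) - (\<Sum>a\<in>V. (x a)^2)"
    unfolding adj_form_def using fin
    by (simp add: terms sum_subtractf power2_eq_square cong: sum.cong)
  also have "(\<Sum>a\<in>V. \<Sum>b\<in>V. x a * x b) = (\<Sum>v\<in>V. x v)^2"
    by (simp add: power2_eq_square sum_product)
  finally have form: "adj_form V E x x = (\<Sum>v\<in>V. x v)^2 - (\<Sum>v\<in>V. (x v)^2)" .
  have sum_S: "(\<Sum>v\<in>V. g (x v)) = (\<Sum>v\<in>S. g (x v))" if "g 0 = 0" for g :: "real \<Rightarrow> real"
    unfolding S_def using fin that by (intro sum.mono_neutral_right) auto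
  have cs: "(\<Sum>v\<in>V. x v)^2 \<le> real (card S) * (\<Sum>v\<in>V. (x v)^2)"
    using square_sum_le_card_mult_sum_squares[of x S] sum_S[of id] sum_S[of "\<lambda>t. t^2"] by simp
  show ?thesis
  proof (cases "S = {}")
    case True
    then show ?thesis using form sum_S[of id] by (simp add: sum_nonneg)
  next
    case False
    then have pos: "real (card S) > 0" using fin by (simp add: S_def card_gt_0_iff)
    have "card S \<le> clique_number V E"
      using card_le_clique_number[OF G clique] by (simp add: S_def)
    then have "(\<Sum>v\<in>V. x v)^2 / real (clique_number V E) \<le> (\<Sum>v\<in>V. x v)^2 / real (card S)"
      using pos by (intro divide_left_mono) auto
    also have "\<dots> \<le> (\<Sum>v\<in>V. (x v)^2)"
      using cs pos by (simp add: divide_le_eq mult.commute)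
    finally show ?thesis using form by (simp add: algebra_simps)
  qed
qed

lemma motzkin_straus:
  assumes G: "simple_graph V E" and nonneg: "\<forall>v\<in>V. 0 \<le> x v"
  shows "adj_form V E x x \<le> (1 - 1 / real (clique_number V E)) * (\<Sum>v\<in>V. x v)^2"
  using nonneg
proof (induction "card {v\<in>V. x v \<noteq> 0}" arbitrary: x rule: less_induct)
  case less
  define S where "S = {v\<in>V. x v \<noteq> 0}"
  define c where "c = 1 - 1 / real (clique_number V E)"
  have finS: "finite S" using simple_graph_finite[OF G] by (simp add: S_def)
  show ?case
  proof (cases "is_clique V E S")
    case True
    then show ?thesis using adj_form_le_if_support_clique[OF G] by (simp add: S_def)
  next
    case False
    then obtain u v where uv: "u \<in> S" "v \<in> S" "u \<noteq> v" "\<not> E u v"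
      unfolding is_clique_def S_def by auto
    define f :: "'a \<Rightarrow> real" where "f = (\<lambda>w. (if w = u then 1 else 0) - (if w = v then 1 else 0))"
    define L where "L = adj_form V E x f + adj_form V E f x"
    have sum_f: "(\<Sum>w\<in>V. f w) = 0"
      using simple_graph_finite[OF G] uv by (simp add: f_def S_def sum_subtractf)
    txt \<open>Moving weight between the nonadjacent vertices u and v changes the form linearly,
      so one of the two directions does not decrease it and empties u or v.\<close>
    have shift: "adj_form V E x x \<le> c * (\<Sum>w\<in>V. x w)^2"
      if "0 \<le> t * L" and y_nonneg: "\<forall>w\<in>V. 0 \<le> x w + t * f w"
        and "z \<in> S" and "x z + t * f z = 0" for t z
    proof -
      let ?y = "\<lambda>w. x w + t * f w"
      have "{w\<in>V. ?y w \<noteq> 0} \<subseteq> S - {z}"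
        using that uv by (auto simp: S_def f_def split: if_splits)
      then have "card {w\<in>V. ?y w \<noteq> 0} < card S"
        using finS \<open>z \<in> S\<close> by (meson card_Diff1_less card_mono finite_Diff le_less_trans)
      then have "adj_form V E ?y ?y \<le> c * (\<Sum>w\<in>V. ?y w)^2"
        using less.hyps y_nonneg by (simp add: S_def c_def)
      moreover have "(\<Sum>w\<in>V. ?y w) = (\<Sum>w\<in>V. x w)"
        using sum_f by (simp add: sum.distrib flip: sum_distrib_left)
      moreover have "adj_form V E ?y ?y = adj_form V E x x + t * L"
        using adj_form_add_scaled[of V E x t f] adj_form_transfer_eq_0[OF G uv(4)]
        by (simp add: L_def f_def algebra_simps)
      ultimately show ?thesis using \<open>0 \<le> t * L\<close> by simp
    qed
    have "0 \<le> x u" "0 \<le> x v" using less.prems uv by (auto simp: S_def)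
    show ?thesis
    proof (cases "0 \<le> L")
      case True
      have "\<forall>w\<in>V. 0 \<le> x w + x v * f w" using less.prems uv \<open>0 \<le> x u\<close> \<open>0 \<le> x v\<close> by (auto simp: f_def)
      then show ?thesis
        using shift[of "x v" v] True less.prems uv by (simp add: f_def S_def c_def)
    next
      case False
      have "\<forall>w\<in>V. 0 \<le> x w - x u * f w" using less.prems uv \<open>0 \<le> x u\<close> \<open>0 \<le> x v\<close> by (auto simp: f_def)
      then show ?thesis
        using shift[of "- x u" u] False less.prems uv
        by (simp add: f_def S_def c_def mult_nonneg_nonpos)
    qed
  qed
qed

lemma adj_form_const_left:
  assumes G: "simple_graph V E"
  shows "adj_form V E (\<lambda>_. p) g = p * (\<Sum>a\<in>V. real (degree V E a) * g a)"
proof -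
  have "adj_form V E g (\<lambda>_. p) = (\<Sum>a\<in>V. g a * p * real (degree V E a))"
    unfolding adj_form_def degree_def using simple_graph_finite[OF G]
    by (simp add: sum.inter_filter[symmetric] mult.commute)
  then show ?thesis
    using adj_form_sym[OF G] by (simp add: sum_distrib_left mult_ac)
qed

lemma adj_form_polarization:
  "adj_form V E (\<lambda>a. x a + y a) (\<lambda>a. x a + y a) - adj_form V E (\<lambda>a. x a - y a) (\<lambda>a. x a - y a)
   = 2 * (adj_form V E x y + adj_form V E y x)"
proof -
  have "(if E a b then (x a + y a) * (x b + y b) else 0) - (if E a b then (x a - y a) * (x b - y b) else 0)
     = 2 * ((if E a b then x a * y b else 0) + (if E a b then y a * x b else 0))" for a b
    by (simp add: algebra_simps)
  then show ?thesis
    unfolding adj_form_def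
    by (simp only: sum_subtractf[symmetric] sum.distrib[symmetric] sum_distrib_left)
qed

lemma adj_form_abs_ge:
  "- adj_form V E w w \<le> adj_form V E (\<lambda>a. \<bar>w a\<bar>) (\<lambda>a. \<bar>w a\<bar>)"
proof -
  have "- adj_form V E w w = (\<Sum>a\<in>V. \<Sum>b\<in>V. if E a b then - (w a * w b) else 0)"
    unfolding adj_form_def by (simp add: sum_negf[symmetric] if_distrib cong: if_cong)
  also have "\<dots> \<le> adj_form V E (\<lambda>a. \<bar>w a\<bar>) (\<lambda>a. \<bar>w a\<bar>)"
    unfolding adj_form_def by (intro sum_mono) (auto simp: abs_mult[symmetric])
  finally show ?thesis .
qed

lemma one_minus_inverse_nonneg: "0 \<le> 1 - 1 / real (n::nat)"
  by (cases n) (auto simp: divide_le_eq)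

lemma neg_adj_form_le:
  assumes G: "simple_graph V E"
  shows "- adj_form V E w w \<le> (1 - 1 / real (clique_number V E)) * real (card V) * (\<Sum>a\<in>V. (w a)^2)"
proof -
  have "- adj_form V E w w \<le> (1 - 1 / real (clique_number V E)) * (\<Sum>a\<in>V. \<bar>w a\<bar>)^2"
    using adj_form_abs_ge[of V E w] motzkin_straus[OF G, of "\<lambda>a. \<bar>w a\<bar>"] by simp
  also have "\<dots> \<le> (1 - 1 / real (clique_number V E)) * (real (card V) * (\<Sum>a\<in>V. (w a)^2))"
    using square_sum_le_card_mult_sum_squares[of "\<lambda>a. \<bar>w a\<bar>" V]
    by (intro mult_left_mono one_minus_inverse_nonneg) simp_all
  finally show ?thesis by (simp add: mult.assoc)
qed

lemma adj_form_polarization_degrees: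
  assumes G: "simple_graph V E"
  defines "d \<equiv> \<lambda>a. real (degree V E a)"
  shows "adj_form V E (\<lambda>a. p + q * d a) (\<lambda>a. p + q * d a) - adj_form V E (\<lambda>a. p - q * d a) (\<lambda>a. p - q * d a)
    = 4 * p * q * (\<Sum>a\<in>V. (d a)^2)"
proof -
  have "adj_form V E (\<lambda>_. p) (\<lambda>a. q * d a) = p * q * (\<Sum>a\<in>V. (d a)^2)"
    by (simp add: adj_form_const_left[OF G] d_def power2_eq_square sum_distrib_left mult_ac)
  then show ?thesis
    using adj_form_polarization[of V E "\<lambda>_. p" "\<lambda>a. q * d a"] adj_form_sym[OF G] by (simp add: mult_ac)
qed

lemma regular_if_sum_degree_squares_extremal:
  assumes G: "simple_graph V E" and "V \<noteq> {}"
  defines "c \<equiv> 1 - 1 / real (clique_number V E)" and "n \<equiv> real (card V)"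
  assumes extremal: "(\<Sum>a\<in>V. (real (degree V E a))^2) = (c * n)^2 * n"
    and "a \<in> V" "b \<in> V"
  shows "degree V E a = degree V E b"
proof -
  define d where "d = (\<lambda>a. real (degree V E a))"
  define D where "D = (\<Sum>a\<in>V. (d a)^2)"
  have fin: "finite V" using simple_graph_finite[OF G] .
  have n_pos: "0 < n" using fin \<open>V \<noteq> {}\<close> by (simp add: n_def card_gt_0_iff)
  have D_eq: "D = (c * n)^2 * n" using extremal by (simp add: D_def d_def)
  have "c = 0 \<or> 0 < c" using one_minus_inverse_nonneg[of "clique_number V E"] by (auto simp: c_def)
  then show ?thesis
  proof
    assume "c = 0"
    then have "D = 0" using D_eq by simp
    then show ?thesis using fin \<open>a \<in> V\<close> \<open>b \<in> V\<close> by (simp add: D_def d_def sum_nonneg_eq_0_iff)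
  next
    assume c_pos: "0 < c"
    txt \<open>Polarize the form at the constant vector p and the degree vector scaled by q;
      p and q are chosen so that every inequality of the chain below is tight.\<close>
    define q where "q = sqrt n"
    define p where "p = c * n * q"
    define u where "u = (\<lambda>a. p + q * d a)"
    define w where "w = (\<lambda>a. p - q * d a)"
    have q_pos: "0 < q" and q_sq: "q^2 = n" using n_pos by (simp_all add: q_def)
    have p_sq: "p^2 = D" using D_eq q_sq by (simp add: p_def power_mult_distrib)
    have pq: "p * q = c * n * n" using q_sq by (simp add: p_def power2_eq_square)
    have "(\<Sum>a\<in>V. (u a)^2) + (\<Sum>a\<in>V. (w a)^2) = (\<Sum>a\<in>V. 2 * p^2 + 2 * q^2 * (d a)^2)"
      by (simp add: u_def w_def power2_eq_square algebra_simps flip: sum.distrib)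
    also have "\<dots> = 2 * p^2 * n + 2 * q^2 * D"
      by (simp add: sum.distrib D_def n_def sum_distrib_left)
    finally have sq: "(\<Sum>a\<in>V. (u a)^2) + (\<Sum>a\<in>V. (w a)^2) = 2 * p^2 * n + 2 * q^2 * D" .
    have "adj_form V E u u \<le> c * (\<Sum>a\<in>V. u a)^2"
      using motzkin_straus[OF G, of u] q_pos c_pos n_pos by (simp add: u_def d_def p_def c_def)
    moreover have "c * (\<Sum>a\<in>V. u a)^2 \<le> c * n * (\<Sum>a\<in>V. (u a)^2)"
      using square_sum_le_card_mult_sum_squares[of u V] c_pos by (simp add: n_def mult.assoc)
    moreover have "- adj_form V E w w \<le> c * n * (\<Sum>a\<in>V. (w a)^2)"
      using neg_adj_form_le[OF G, of w] by (simp add: c_def n_def)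
    moreover have "c * n * ((\<Sum>a\<in>V. (u a)^2) + (\<Sum>a\<in>V. (w a)^2)) = 4 * p * q * D"
      unfolding sq p_sq q_sq by (simp add: pq algebra_simps)
    moreover have "adj_form V E u u - adj_form V E w w = 4 * p * q * D"
      using adj_form_polarization_degrees[OF G] by (simp add: u_def w_def D_def d_def)
    ultimately have "c * (\<Sum>a\<in>V. u a)^2 = c * n * (\<Sum>a\<in>V. (u a)^2)"
      unfolding distrib_left by linarith
    then have "(\<Sum>a\<in>V. u a)^2 = n * (\<Sum>a\<in>V. (u a)^2)"
      using c_pos by simp
    then have "u a = u b"
      using const_if_square_sum_eq_card_mult_sum_squares[OF fin _ \<open>a \<in> V\<close> \<open>b \<in> V\<close>] by (simp add: n_def)
    then show ?thesis using q_pos by (simp add: u_def d_def)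
  qed
qed

lemma degrees_eq_if_sum_degree_squares_extremal:
  assumes G: "simple_graph V E" and "V \<noteq> {}"
  defines "c \<equiv> 1 - 1 / real (clique_number V E)" and "n \<equiv> real (card V)"
  assumes extremal: "(\<Sum>a\<in>V. (real (degree V E a))^2) = (c * n)^2 * n"
  shows "\<forall>a\<in>V. real (degree V E a) = c * n"
proof
  fix a assume "a \<in> V"
  have n_pos: "0 < n" using simple_graph_finite[OF G] \<open>V \<noteq> {}\<close> by (simp add: n_def card_gt_0_iff)
  have "(\<Sum>b\<in>V. (real (degree V E b))^2) = n * (real (degree V E a))^2"
    using regular_if_sum_degree_squares_extremal[OF G \<open>V \<noteq> {}\<close> extremal[unfolded c_def n_def] _ \<open>a \<in> V\<close>]
    by (simp add: n_def)
  then have "(real (degree V E a))^2 = (c * n)^2"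
    using extremal n_pos by (simp add: power2_eq_square mult_ac)
  then show "real (degree V E a) = c * n"
    using one_minus_inverse_nonneg[of "clique_number V E"] n_pos by (simp add: c_def power2_eq_iff_nonneg)
qed

lemma sum_degree_squares_if_clique_number_eq:
  assumes G: "simple_graph V E" and "V \<noteq> {}"
  defines "c \<equiv> 1 - 1 / real (clique_number V E)" and "n \<equiv> real (card V)"
  assumes "real (clique_number V E) = n / (n - quad_mean_degree V E)"
  shows "(\<Sum>a\<in>V. (real (degree V E a))^2) = (c * n)^2 * n"
proof -
  define \<omega> where "\<omega> = real (clique_number V E)"
  define D where "D = (\<Sum>a\<in>V. (real (degree V E a))^2)"
  have n_pos: "0 < n"
    using simple_graph_finite[OF G] \<open>V \<noteq> {}\<close> by (simp add: n_def card_gt_0_iff)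
  have "1 \<le> \<omega>" using clique_number_ge_1[OF G \<open>V \<noteq> {}\<close>] by (simp add: \<omega>_def)
  have "n - quad_mean_degree V E \<noteq> 0" using assms(5) \<open>1 \<le> \<omega>\<close> by (auto simp: \<omega>_def)
  then have "\<omega> * (n - quad_mean_degree V E) = n" using assms(5) by (simp add: \<omega>_def)
  then have "quad_mean_degree V E = c * n"
    using \<open>1 \<le> \<omega>\<close> by (simp add: c_def \<omega>_def field_simps)
  moreover have "(quad_mean_degree V E)^2 = D / n"
    by (simp add: quad_mean_degree_def D_def n_def sum_nonneg)
  ultimately have "D / n = (c * n)^2" by simp
  then show ?thesis using n_pos by (simp add: D_def divide_eq_eq)
qed

text \<open>Non-neighbourhoods are closed: by irreflexivity a vertex is its own non-neighbour.\<close>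

definition non_neighbours :: "'a set \<Rightarrow> ('a \<Rightarrow> 'a \<Rightarrow> bool) \<Rightarrow> 'a \<Rightarrow> 'a set" where
  "non_neighbours V E a = {b\<in>V. \<not> E a b}"

lemma self_in_non_neighbours: "simple_graph V E \<Longrightarrow> a \<in> V \<Longrightarrow> a \<in> non_neighbours V E a"
  by (simp add: non_neighbours_def simple_graph_irrefl)

lemma degree_plus_card_non_neighbours:
  assumes "simple_graph V E" and "a \<in> V"
  shows "degree V E a + card (non_neighbours V E a) = card V"
proof -
  have "non_neighbours V E a = V - {b\<in>V. E a b}" by (auto simp: non_neighbours_def)
  moreover have "card {b\<in>V. E a b} \<le> card V"
    using simple_graph_finite[OF assms(1)] by (intro card_mono) auto
  ultimately show ?thesis
    using simple_graph_finite[OF assms(1)] by (simp add: card_Diff_subset degree_def)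
qed

lemma greedy_clique:
  assumes G: "simple_graph V E" and "W \<subseteq> V" and "a \<in> W"
    and sparse: "\<forall>b\<in>W. card (W \<inter> non_neighbours V E b) \<le> k"
  shows "\<exists>C\<subseteq>W. is_clique V E C \<and> card W + k \<le> card (W \<inter> non_neighbours V E a) + k * card C"
  using assms(2-4)
proof (induction "card W" arbitrary: W a rule: less_induct)
  case less
  define W' where "W' = W - non_neighbours V E a"
  have finW: "finite W" using less.prems(1) simple_graph_finite[OF G] by (rule finite_subset)
  have "W' \<subseteq> W" by (auto simp: W'_def)
  have card_W: "card W = card W' + card (W \<inter> non_neighbours V E a)"
  proof -
    have "W = W' \<union> (W \<inter> non_neighbours V E a)" "W' \<inter> (W \<inter> non_neighbours V E a) = {}"
      by (auto simp: W'_def)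
    then show ?thesis using finW \<open>W' \<subseteq> W\<close> by (metis card_Un_disjoint finite_Int finite_subset)
  qed
  have "W' \<subset> W"
    using less.prems(1,2) self_in_non_neighbours[OF G] by (auto simp: W'_def)
  have adj: "E a b" if "b \<in> W'" for b
    using that less.prems(1) by (auto simp: W'_def non_neighbours_def)
  show ?case
  proof (cases "W' = {}")
    case True
    then show ?thesis
      using less.prems card_W by (intro exI[of _ "{a}"]) (auto simp: is_clique_def)
  next
    case False
    then obtain b where "b \<in> W'" by auto
    have "\<forall>b\<in>W'. card (W' \<inter> non_neighbours V E b) \<le> k"
    proof
      fix c assume "c \<in> W'"
      have "card (W' \<inter> non_neighbours V E c) \<le> card (W \<inter> non_neighbours V E c)"
        using finW \<open>W' \<subseteq> W\<close> by (intro card_mono) auto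
      then show "card (W' \<inter> non_neighbours V E c) \<le> k"
        using less.prems(3) \<open>c \<in> W'\<close> \<open>W' \<subseteq> W\<close> by force
    qed
    then obtain C where C: "C \<subseteq> W'" "is_clique V E C"
        and bound: "card W' + k \<le> card (W' \<inter> non_neighbours V E b) + k * card C"
      using less.hyps[of W' b] psubset_card_mono[OF finW \<open>W' \<subset> W\<close>] \<open>W' \<subseteq> W\<close> less.prems(1)
        \<open>b \<in> W'\<close> by auto
    have "card (W' \<inter> non_neighbours V E b) \<le> k"
      using \<open>\<forall>b\<in>W'. _\<close> \<open>b \<in> W'\<close> by blast
    then have "card W' \<le> k * card C" using bound by linarith
    moreover have "card (insert a C) = card C + 1"
      using C(1) finW \<open>W' \<subseteq> W\<close> self_in_non_neighbours[OF G] less.prems(1,2)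
      by (subst card_insert_disjoint) (auto simp: W'_def intro: finite_subset)
    moreover have "is_clique V E (insert a C)"
      using C adj less.prems(1,2) simple_graph_sym[OF G] unfolding is_clique_def by blast
    ultimately show ?thesis
      using card_W C(1) \<open>W' \<subseteq> W\<close> less.prems(2)
      by (intro exI[of _ "insert a C"]) (auto simp: algebra_simps)
  qed
qed

lemma nonadjacency_trans_if_balanced:
  assumes G: "simple_graph V E"
    and non_nb: "\<forall>a\<in>V. card (non_neighbours V E a) = k"
    and card_V: "card V = clique_number V E * k"
    and V: "x \<in> V" "y \<in> V" "z \<in> V" and "\<not> E x y" "\<not> E y z"
  shows "\<not> E x z"
proof
  assume "E x z"
  define W where "W = {b\<in>V. E x b}"
  have "W \<subseteq> V" "z \<in> W" using V \<open>E x z\<close> by (auto simp: W_def)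
  have fin: "finite V" using simple_graph_finite[OF G] .
  have card_W: "card W + k = card V"
    using degree_plus_card_non_neighbours[OF G V(1)] non_nb V(1) by (simp add: degree_def W_def)
  have sparse: "\<forall>b\<in>W. card (W \<inter> non_neighbours V E b) \<le> k"
  proof
    fix b assume "b \<in> W"
    have "card (W \<inter> non_neighbours V E b) \<le> card (non_neighbours V E b)"
      using fin by (intro card_mono) (auto simp: non_neighbours_def)
    then show "card (W \<inter> non_neighbours V E b) \<le> k" using non_nb \<open>b \<in> W\<close> \<open>W \<subseteq> V\<close> by auto
  qed
  txt \<open>y is a non-neighbour of z outside W, so z is strictly below the bound.\<close>
  have "y \<in> non_neighbours V E z" "y \<notin> W"
    using V \<open>\<not> E x y\<close> \<open>\<not> E y z\<close> simple_graph_sym[OF G] by (auto simp: non_neighbours_def W_def)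
  then have "card (W \<inter> non_neighbours V E z) < card (non_neighbours V E z)"
    using fin by (intro psubset_card_mono) (auto simp: non_neighbours_def)
  then have z_sparse: "card (W \<inter> non_neighbours V E z) < k" using non_nb V(3) by simp
  obtain C where C: "C \<subseteq> W" "is_clique V E C"
    and "card W + k \<le> card (W \<inter> non_neighbours V E z) + k * card C"
    using greedy_clique[OF G \<open>W \<subseteq> V\<close> \<open>z \<in> W\<close> sparse] by blast
  then have "clique_number V E * k < (card C + 1) * k"
    using card_W card_V z_sparse by (simp add: algebra_simps)
  then have "clique_number V E < card C + 1" by (meson mult_less_cancel2)
  moreover have "card (insert x C) = card C + 1"
    using C(1) fin \<open>W \<subseteq> V\<close> simple_graph_irrefl[OF G]
    by (subst card_insert_disjoint) (auto simp: W_def intro: finite_subset)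
  moreover have "is_clique V E (insert x C)"
    using C V(1) simple_graph_sym[OF G] unfolding is_clique_def W_def by blast
  ultimately show False using card_le_clique_number[OF G] by fastforce
qed

lemma non_neighbours_eq_if_nonadjacent:
  assumes G: "simple_graph V E"
    and trans: "\<forall>x\<in>V. \<forall>y\<in>V. \<forall>z\<in>V. \<not> E x y \<longrightarrow> \<not> E y z \<longrightarrow> \<not> E x z"
    and "x \<in> V" "y \<in> V" "\<not> E x y"
  shows "non_neighbours V E x = non_neighbours V E y"
  using assms simple_graph_sym[OF G] unfolding non_neighbours_def by blast

lemma partition_on_non_neighbours:
  assumes G: "simple_graph V E"
    and trans: "\<forall>x\<in>V. \<forall>y\<in>V. \<forall>z\<in>V. \<not> E x y \<longrightarrow> \<not> E y z \<longrightarrow> \<not> E x z"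
  shows "partition_on V (non_neighbours V E ` V)"
proof (rule partition_onI)
  fix p q assume "p \<in> non_neighbours V E ` V" "q \<in> non_neighbours V E ` V" "p \<noteq> q"
  then obtain a b where ab: "a \<in> V" "b \<in> V" "p = non_neighbours V E a" "q = non_neighbours V E b"
    by auto
  show "disjnt p q"
  proof (rule ccontr)
    assume "\<not> disjnt p q"
    then obtain c where "c \<in> V" "\<not> E a c" "\<not> E c b"
      using ab simple_graph_sym[OF G] by (auto simp: disjnt_def non_neighbours_def)
    then have "\<not> E a b" using ab trans by blast
    then have "p = q" using ab non_neighbours_eq_if_nonadjacent[OF G trans] by blast
    then show False using \<open>p \<noteq> q\<close> by simp
  qed
qed (use self_in_non_neighbours[OF G] in \<open>auto simp: non_neighbours_def\<close>)

lemma complete_multipartite_if_nonadjacency_trans: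
  assumes G: "simple_graph V E" and "V \<noteq> {}"
    and trans: "\<forall>x\<in>V. \<forall>y\<in>V. \<forall>z\<in>V. \<not> E x y \<longrightarrow> \<not> E y z \<longrightarrow> \<not> E x z"
    and non_nb: "\<forall>a\<in>V. card (non_neighbours V E a) = k"
    and card_V: "card V = m * k"
  shows "complete_multipartite V E m"
proof -
  define P where "P = non_neighbours V E ` V"
  have same_class: "non_neighbours V E x = non_neighbours V E y" if "x \<in> V" "y \<in> V" "\<not> E x y" for x y
    using non_neighbours_eq_if_nonadjacent[OF G trans that] .
  have partition: "partition_on V P" using partition_on_non_neighbours[OF G trans] by (simp add: P_def)
  have "k * card P = card (\<Union>P)"
  proof (rule card_partition)
    show "finite P" "finite (\<Union>P)" using simple_graph_finite[OF G] partition
      by (simp_all add: P_def partition_on_def)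
    show "card c = k" if "c \<in> P" for c using that non_nb by (auto simp: P_def)
    show "c1 \<inter> c2 = {}" if "c1 \<in> P" "c2 \<in> P" "c1 \<noteq> c2" for c1 c2
      using partition that unfolding partition_on_def disjoint_def by blast
  qed
  moreover have "0 < k"
  proof -
    obtain a where "a \<in> V" using \<open>V \<noteq> {}\<close> by auto
    then have "a \<in> non_neighbours V E a" "finite (non_neighbours V E a)"
      using self_in_non_neighbours[OF G] simple_graph_finite[OF G] by (auto simp: non_neighbours_def)
    then show ?thesis using non_nb \<open>a \<in> V\<close> card_gt_0_iff by fastforce
  qed
  ultimately have "card P = m" using card_V partition by (simp add: partition_on_def mult.commute)
  moreover have "\<forall>X\<in>P. \<forall>x\<in>X. \<forall>y\<in>X. \<not> E x y"
  proof (intro ballI)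
    fix X x y assume "X \<in> P" "x \<in> X" "y \<in> X"
    then obtain a where "a \<in> V" "\<not> E x a" "\<not> E a y" "x \<in> V" "y \<in> V"
      using simple_graph_sym[OF G] by (auto simp: P_def non_neighbours_def)
    then show "\<not> E x y" using trans by blast
  qed
  moreover have "\<forall>X\<in>P. \<forall>Y\<in>P. X \<noteq> Y \<longrightarrow> (\<forall>x\<in>X. \<forall>y\<in>Y. E x y)"
  proof (intro ballI impI)
    fix X Y x y assume "X \<in> P" "Y \<in> P" "X \<noteq> Y" "x \<in> X" "y \<in> Y"
    then have "X = non_neighbours V E x" "Y = non_neighbours V E y" "x \<in> V" "y \<in> V"
      using same_class by (auto simp: P_def non_neighbours_def)
    then show "E x y" using same_class \<open>X \<noteq> Y\<close> by blast
  qed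
  ultimately show ?thesis using partition unfolding complete_multipartite_def by blast
qed

lemma balanced_non_neighbourhoods_if_degrees_eq:
  assumes G: "simple_graph V E" and "V \<noteq> {}"
    and degrees: "\<forall>a\<in>V. real (degree V E a) = (1 - 1 / real (clique_number V E)) * real (card V)"
  obtains k where "\<forall>a\<in>V. card (non_neighbours V E a) = k" and "card V = clique_number V E * k"
proof -
  obtain a0 where "a0 \<in> V" using \<open>V \<noteq> {}\<close> by auto
  define k where "k = card (non_neighbours V E a0)"
  have "card (non_neighbours V E a) = k" if "a \<in> V" for a
  proof -
    have "real (degree V E a) = real (degree V E a0)" using degrees that \<open>a0 \<in> V\<close> by simp
    then have "degree V E a = degree V E a0" by (simp only: of_nat_eq_iff)
    then show ?thesis
      using degree_plus_card_non_neighbours[OF G that] degree_plus_card_non_neighbours[OF G \<open>a0 \<in> V\<close>]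
      by (simp add: k_def)
  qed
  moreover have "card V = clique_number V E * k"
  proof -
    have "real (degree V E a0) + real k = real (card V)"
      using degree_plus_card_non_neighbours[OF G \<open>a0 \<in> V\<close>] unfolding k_def by linarith
    then have "real k = real (card V) / real (clique_number V E)"
      using degrees \<open>a0 \<in> V\<close> by (simp add: algebra_simps)
    then have "real (card V) = real (clique_number V E * k)"
      using clique_number_ge_1[OF G \<open>V \<noteq> {}\<close>] by (simp add: field_simps)
    then show ?thesis by (simp only: of_nat_eq_iff)
  qed
  ultimately show ?thesis using that by blast
qed

theorem corollary4p4:
  fixes V :: "'a set" and E :: "'a \<Rightarrow> 'a \<Rightarrow> bool"
  assumes "simple_graph V E"
    and "V \<noteq> {}"
    and "real (clique_number V E) = real (card V) / (real (card V) - quad_mean_degree V E)"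
  shows "regular V E \<and> complete_multipartite V E (clique_number V E)"
proof -
  note G = assms(1) and nonempty = assms(2)
  have "\<forall>a\<in>V. real (degree V E a) = (1 - 1 / real (clique_number V E)) * real (card V)"
    using degrees_eq_if_sum_degree_squares_extremal[OF G nonempty]
      sum_degree_squares_if_clique_number_eq[OF assms] by blast
  then obtain k where non_nb: "\<forall>a\<in>V. card (non_neighbours V E a) = k"
    and card_V: "card V = clique_number V E * k"
    using balanced_non_neighbourhoods_if_degrees_eq[OF G nonempty] by blast
  have "\<forall>x\<in>V. \<forall>y\<in>V. \<forall>z\<in>V. \<not> E x y \<longrightarrow> \<not> E y z \<longrightarrow> \<not> E x z"
    using nonadjacency_trans_if_balanced[OF G non_nb card_V] by blast
  then have "complete_multipartite V E (clique_number V E)"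
    using complete_multipartite_if_nonadjacency_trans[OF G nonempty _ non_nb card_V] by blast
  moreover have "regular V E"
    unfolding regular_def
    using degree_plus_card_non_neighbours[OF G] non_nb by (metis add_diff_cancel_right')
  ultimately show ?thesis by blast
qed

end
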